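(* Let $G$ be the graph defined in the context. Then $G$ does not contain an induced subgraph isomorphic to $P_6$.
   Context: $P_n$ denotes the path on $n$ vertices. Let $\mathbb{F}=\mathbb{F}_2[\alpha]/(\alpha^4+\alpha+1)$ be the field with 16 elements. Let $S=\{x^3: x\in\mathbb{F}^\times\}=\{1,\alpha^3,\alpha^2+\alpha^3,\alpha+\alpha^3,1+\alpha+\alpha^2+\alpha^3\}$ be the set of nonzero cubes. Let $G$ be the graph with vertex set $\mathbb{F}$ in which distinct $x,y$ are adjacent if and only if $x-y\in S$. *)

theory Defs
  imports Main "HOL-Library.Z2" "HOL-Computational_Algebra.Polynomial"
begin

text \<open>The field F = F_2[alpha]/(alpha^4+alpha+1), represented by the reduced
  polynomials over F_2 (type bit) of degree < 4; arithmetic is polynomial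
  arithmetic followed by reduction modulo alpha^4+alpha+1.\<close>

definition gf_mod :: "bit poly" where
  "gf_mod = [:1, 1, 0, 0, 1:]"

definition gf16 :: "bit poly set" where
  "gf16 = {p. p = p mod gf_mod}"

definition gf_mult :: "bit poly \<Rightarrow> bit poly \<Rightarrow> bit poly" where
  "gf_mult p q = (p * q) mod gf_mod"

definition gf_sub :: "bit poly \<Rightarrow> bit poly \<Rightarrow> bit poly" where
  "gf_sub p q = (p - q) mod gf_mod"

definition cubes :: "bit poly set" where
  "cubes = {gf_mult x (gf_mult x x) | x. x \<in> gf16 \<and> x \<noteq> 0}"

definition G_adj :: "bit poly \<Rightarrow> bit poly \<Rightarrow> bool" where
  "G_adj x y \<longleftrightarrow> x \<noteq> y \<and> gf_sub x y \<in> cubes"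

definition has_induced_path :: "'a set \<Rightarrow> ('a \<Rightarrow> 'a \<Rightarrow> bool) \<Rightarrow> nat \<Rightarrow> bool" where
  "has_induced_path V E n \<longleftrightarrow>
     (\<exists>vs. length vs = n \<and> distinct vs \<and> set vs \<subseteq> V \<and>
        (\<forall>i<n. \<forall>j<n. E (vs ! i) (vs ! j) \<longleftrightarrow> (i = Suc j \<or> j = Suc i)))"

end

theory Submission
  imports Defs
begin

text \<open>Viewed additively, the field is F_2^4 and G is the Cayley graph of F_2^4 with
  connection set S. The five elements of S sum to 0, so any four distinct elements of S
  add up to the fifth. Along an induced path v_0, ..., v_5 with steps s_i = v_i - v_(i-1)
  in S, the absence of chords of span 3 forces s_i, s_(i+1), s_(i+2) to be distinct,
  and the absence of chords of span 4 then forces s_i = s_(i+3). Hence the steps read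
  s_1 s_2 s_3 s_1 s_2, and v_5 - v_0 = s_3 is in S: a chord of span 5.\<close>

lemma four_sum_mem_of_card_5_sum_0:
  fixes S :: "'a::ab_group_add set"
  assumes char2: "\<And>x::'a. x + x = 0" and card: "card S = 5" and sum0: "\<Sum>S = 0"
    and in_S: "a \<in> S" "b \<in> S" "c \<in> S" "d \<in> S" and dist: "distinct [a, b, c, d]"
  shows "a + b + c + d \<in> S"
proof -
  have "card (S - {a, b, c, d}) = 1"
    using card in_S dist by (simp add: card_Diff_subset)
  then obtain e where e: "S - {a, b, c, d} = {e}" by (auto simp: card_1_singleton_iff)
  then have S: "S = {a, b, c, d, e}" and "e \<notin> {a, b, c, d}" using in_S by auto
  then have "\<Sum>S = a + b + c + d + e" using dist by (auto simp: add.assoc)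
  then have "a + b + c + d + e = 0" using sum0 by simp
  then have "a + b + c + d = e" using char2[of e] by (metis add_right_imp_eq)
  then show ?thesis using S by simp
qed

lemma five_step_walk_has_long_chord:
  fixes S :: "'a::ab_group_add set" and v :: "nat \<Rightarrow> 'a"
  assumes char2: "\<And>x::'a. x + x = 0"
    and four_sums: "\<And>a b c d. \<lbrakk>a \<in> S; b \<in> S; c \<in> S; d \<in> S; distinct [a, b, c, d]\<rbrakk>
                      \<Longrightarrow> a + b + c + d \<in> S"
    and steps: "v 1 - v 0 \<in> S" "v 2 - v 1 \<in> S" "v 3 - v 2 \<in> S" "v 4 - v 3 \<in> S" "v 5 - v 4 \<in> S"
    and no_return: "v 2 \<noteq> v 0" "v 3 \<noteq> v 1" "v 4 \<noteq> v 2" "v 5 \<noteq> v 3"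
    and no_chords: "v 3 - v 0 \<notin> S" "v 4 - v 1 \<notin> S" "v 5 - v 2 \<notin> S"
                   "v 4 - v 0 \<notin> S" "v 5 - v 1 \<notin> S"
  shows "v 5 - v 0 \<in> S"
proof -
  have cancel: "x + (x + y) = y" for x y :: 'a
    by (metis add.assoc add_0 char2)
  define s1 s2 s3 s4 s5 where
    "s1 = v 1 - v 0" "s2 = v 2 - v 1" "s3 = v 3 - v 2" "s4 = v 4 - v 3" "s5 = v 5 - v 4"
  note s_defs = s1_s2_s3_s4_s5_def
  have s_in: "s1 \<in> S" "s2 \<in> S" "s3 \<in> S" "s4 \<in> S" "s5 \<in> S"
    using steps by (simp_all add: s_defs)
  have consecutive: "s1 \<noteq> s2" "s2 \<noteq> s3" "s3 \<noteq> s4" "s4 \<noteq> s5"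
  proof -
    have "s1 + s2 = v 2 - v 0" "s2 + s3 = v 3 - v 1" "s3 + s4 = v 4 - v 2" "s4 + s5 = v 5 - v 3"
      by (simp_all add: s_defs)
    then show "s1 \<noteq> s2" "s2 \<noteq> s3" "s3 \<noteq> s4" "s4 \<noteq> s5"
      using no_return char2 by auto
  qed
  have two_apart: "s1 \<noteq> s3" "s2 \<noteq> s4" "s3 \<noteq> s5"
  proof -
    have "s1 + s2 + s3 = v 3 - v 0" "s2 + s3 + s4 = v 4 - v 1" "s3 + s4 + s5 = v 5 - v 2"
      by (simp_all add: s_defs)
    moreover have "x + y + x = y" for x y :: 'a
      by (simp add: algebra_simps cancel)
    ultimately show "s1 \<noteq> s3" "s2 \<noteq> s4" "s3 \<noteq> s5"
      using no_chords(1-3) s_in by metis+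
  qed
  have three_apart: "s1 = s4" "s2 = s5"
  proof -
    have "s1 + s2 + s3 + s4 = v 4 - v 0" "s2 + s3 + s4 + s5 = v 5 - v 1"
      by (simp_all add: s_defs)
    then show "s1 = s4" "s2 = s5"
      using no_chords(4,5) four_sums[of s1 s2 s3 s4] four_sums[of s2 s3 s4 s5]
        s_in consecutive two_apart by auto
  qed
  have "v 5 - v 0 = s1 + s2 + s3 + s4 + s5"
    by (simp add: s_defs)
  also have "\<dots> = s3"
    using three_apart by (simp add: algebra_simps cancel char2)
  finally show ?thesis
    using s_in(3) by simp
qed

lemma cayley_graph_no_induced_P6:
  fixes S :: "'a::ab_group_add set"
  assumes char2: "\<And>x::'a. x + x = 0"
    and four_sums: "\<And>a b c d. \<lbrakk>a \<in> S; b \<in> S; c \<in> S; d \<in> S; distinct [a, b, c, d]\<rbrakk>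
                      \<Longrightarrow> a + b + c + d \<in> S"
  shows "\<not> has_induced_path V (\<lambda>x y. x \<noteq> y \<and> x - y \<in> S) 6"
proof
  assume "has_induced_path V (\<lambda>x y. x \<noteq> y \<and> x - y \<in> S) 6"
  then obtain vs where len: "length vs = 6" and dist: "distinct vs"
    and adj: "\<forall>i<6. \<forall>j<6. (vs ! i \<noteq> vs ! j \<and> vs ! i - vs ! j \<in> S) \<longleftrightarrow> (i = Suc j \<or> j = Suc i)"
    unfolding has_induced_path_def by blast
  have chord_iff: "vs ! i - vs ! j \<in> S \<longleftrightarrow> i = Suc j" if "j < i" "i < 6" for j i
  proof -
    have "vs ! i \<noteq> vs ! j" using dist len that by (simp add: nth_eq_iff_index_eq)
    with adj[rule_format, of i j] that show ?thesis by auto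
  qed
  have "vs ! 5 - vs ! 0 \<in> S"
  proof (rule five_step_walk_has_long_chord[OF char2 four_sums, where v = "(!) vs"])
  qed (use chord_iff[of 0 1] chord_iff[of 1 2] chord_iff[of 2 3] chord_iff[of 3 4]
         chord_iff[of 4 5] chord_iff[of 0 3] chord_iff[of 1 4] chord_iff[of 2 5]
         chord_iff[of 0 4] chord_iff[of 1 5] dist len
       in \<open>simp_all add: nth_eq_iff_index_eq\<close>)
  then show False
    using chord_iff[of 0 5] by simp
qed

lemma has_induced_path_cong:
  assumes "\<And>x y. x \<in> V \<Longrightarrow> y \<in> V \<Longrightarrow> E x y \<longleftrightarrow> E' x y"
  shows "has_induced_path V E n \<longleftrightarrow> has_induced_path V E' n"
  unfolding has_induced_path_def
  by (intro ex_cong1 conj_cong refl) (auto simp: assms subset_iff)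

lemma mod_eq_self_iff_degree_less:
  fixes p q :: "'a::field poly"
  assumes "q \<noteq> 0"
  shows "p mod q = p \<longleftrightarrow> p = 0 \<or> degree p < degree q"
  using degree_mod_less[OF assms, of p] mod_poly_less[of p q] by auto

lemma gf16_eq_degree_less: "gf16 = {p. degree p < 4}"
proof -
  have "p = p mod gf_mod \<longleftrightarrow> degree p < 4" for p
    using mod_eq_self_iff_degree_less[of gf_mod p] by (auto simp: gf_mod_def)
  then show ?thesis by (simp add: gf16_def)
qed

lemma gf_sub_eq_diff: "x \<in> gf16 \<Longrightarrow> y \<in> gf16 \<Longrightarrow> gf_sub x y = x - y"
  using degree_diff_le_max[of x y]
  by (auto simp: gf_sub_def gf16_eq_degree_less gf_mod_def intro!: mod_poly_less)

lemma bit_poly_add_self: "(p::bit poly) + p = 0"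
  by (rule poly_eqI) (simp only: coeff_add, simp)

lemma degree_less_4_eq: "{p::'a::zero poly. degree p < 4} = {[:a, b, c, d:] | a b c d. True}"
proof -
  have "p = [:coeff p 0, coeff p 1, coeff p 2, coeff p 3:]" if "degree p < 4" for p :: "'a poly"
    using that by (intro poly_eqI) (auto simp: coeff_pCons coeff_eq_0 eval_nat_numeral split: nat.splits)
  moreover have "degree [:a, b, c, d:] < 4" for a b c d :: 'a
    by (intro le_less_trans[OF degree_pCons_le]) (auto intro: le_less_trans[OF degree_pCons_le])
  ultimately show ?thesis by blast
qed

lemma cubes_eq: "cubes = {1, [:0, 0, 0, 1:], [:0, 0, 1, 1:], [:0, 1, 0, 1:], [:1, 1, 1, 1:]}"
proof -
  have "gf16 = set [[:a, b, c, d:]. a \<leftarrow> [0, 1], b \<leftarrow> [0, 1], c \<leftarrow> [0, 1], d \<leftarrow> [0::bit, 1]]"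
    unfolding gf16_eq_degree_less degree_less_4_eq by (auto simp: bit_not_one_iff)
  then have "cubes = (\<lambda>x. gf_mult x (gf_mult x x)) `
      (set [[:a, b, c, d:]. a \<leftarrow> [0, 1], b \<leftarrow> [0, 1], c \<leftarrow> [0, 1], d \<leftarrow> [0::bit, 1]] - {0})"
    unfolding cubes_def by auto
  also have "\<dots> = {1, [:0, 0, 0, 1:], [:0, 0, 1, 1:], [:0, 1, 0, 1:], [:1, 1, 1, 1:]}"
    unfolding gf_mult_def gf_mod_def by code_simp
  finally show ?thesis .
qed

lemma card_cubes: "card cubes = 5"
  unfolding cubes_eq by code_simp

lemma sum_cubes: "\<Sum>cubes = 0"
  unfolding cubes_eq by code_simp

theorem claim1:
  shows "\<not> has_induced_path gf16 G_adj 6"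
proof -
  have "has_induced_path gf16 G_adj 6 \<longleftrightarrow>
        has_induced_path gf16 (\<lambda>x y. x \<noteq> y \<and> x - y \<in> cubes) 6"
    by (rule has_induced_path_cong) (simp add: G_adj_def gf_sub_eq_diff)
  moreover have "\<not> has_induced_path gf16 (\<lambda>x y. x \<noteq> y \<and> x - y \<in> cubes) 6"
    using four_sum_mem_of_card_5_sum_0[OF bit_poly_add_self card_cubes sum_cubes]
    by (rule cayley_graph_no_induced_P6[OF bit_poly_add_self])
  ultimately show ?thesis by simp
qed

end
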